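(* Let $\mathcal C$ be a finitely graded flow category in geometric chains. Then the flow complex $CM_*(\mathcal C)=\bigoplus_{X\in\mathsf{Ob}(\mathcal C)}C_*(X)[\widetilde i(X)]\otimes_{\mathbb Z/2}\mathbb Z[\Lambda(X)]$ with differential $d=\partial+d_M$, where $\partial$ is the geometric boundary and $d_M\phi=\sum_{Y}(-1)^{\dim\phi}\,\phi\times_X\mathcal C_{XY}$ for $\phi\in C_*(X)$, is a chain complex (relatively $\mathbb Z/2N$-graded, with $d$ of degree $-1$ and $d^2=0$).
   Context: For a closed smooth manifold $M$, $C_*(M)$ denotes a chain complex of geometric chains (generated by stratified-smooth maps $\phi:P\to M$ from compact oriented stratified-smooth spaces, modulo relations; concentrated in degrees $[0,\dim M]$), with boundary $\partial$, $\partial^2=0$, and reversing orientation of $P$ negating the chain. Given a chain $W\in C_*(M\times N)$ whose projection to $M$ is a submersion and $M$ oriented, there is a fiber product map $\times_M W:C_*(M)\to C_{*+\dim W-\dim M}(N)$, $P\mapsto P\times_M W$, which is associative, negates if the orientation of $M$ or $W$ is negated, and satisfies $\partial(\phi\times_M W)=(\partial\phi)\times_M W+(-1)^{\dim P+\dim M}\phi\times_M(\partial W)$. A finitely graded flow category $\mathcal C$ consists of: a finite set $\mathsf{Ob}(\mathcal C)$ of closed connected orientable smooth manifolds; for each $X$ a two-element set $\Lambda(X)$; a function $\widetilde i:\mathsf{Ob}\times\mathsf{Ob}\to\mathbb Z/2N$ with $\widetilde i(X,Y)+\widetilde i(Y,Z)=\widetilde i(X,Z)$; for each $X,Y$, each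 orientation of $X$ and elements of $\Lambda(X),\Lambda(Y)$, a geometric chain $\mathcal C_{XY}\in C_{\dim X+\widetilde i(X,Y)-1}(X\times Y)$ (degree read mod $2N$) whose map to $X$ is a submersion, whose orientation reverses if any one of these choices is changed; and satisfying $(-1)^{\dim X}\partial\mathcal C_{XY}=\sum_Z(-1)^{\widetilde i(X,Z)}\mathcal C_{XZ}\times_Z\mathcal C_{ZY}$ in $C_*(X\times Y)$. In $CM_*(\mathcal C)$, $\mathbb Z/2$ acts on $C_*(X)$ by orientation reversal and on $\Lambda(X)$ by swapping; the grading shift means a chain $P$ in $X$ and $Q$ in $Y$ have relative grading $\dim P-\dim Q+\widetilde i(X,Y)$. *)

theory Defs
  imports "HOL-Number_Theory.Cong"
begin

text \<open>Abstract (axiomatic) model of geometric Ch.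
  Spaces have type 's, all Ch live in an ambient abelian group 'c.
  Ch s k  = the group C_k(s) of degree-k Ch on the space s (a subgroup of 'c),
  dim s       = dimension of the (closed smooth) manifold s,
  prd X Y   = the product manifold X x Y,
  bd s k      = geometric boundary C_k(s) -> C_(k-1)(s),
  fp M N p q phi W = phi x_M W  for phi in C_p(M), W in C_q(M x N)   (lands in C_(p+q-dim M)(N)),
  fpp X Z Y a b A B = A x_Z B  for A in C_a(X x Z), B in C_b(Z x Y)   (lands in C_(a+b-dim Z)(X x Y)).\<close>

definition signed :: "int \<Rightarrow> 'c::ab_group_add \<Rightarrow> 'c" where
  "signed e x = (if even e then x else - x)"

definition geometric_chain_model ::
  "('s \<Rightarrow> int \<Rightarrow> 'c::ab_group_add set) \<Rightarrow> ('s \<Rightarrow> nat) \<Rightarrow> ('s \<Rightarrow> 's \<Rightarrow> 's)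
   \<Rightarrow> ('s \<Rightarrow> int \<Rightarrow> 'c \<Rightarrow> 'c)
   \<Rightarrow> ('s \<Rightarrow> 's \<Rightarrow> int \<Rightarrow> int \<Rightarrow> 'c \<Rightarrow> 'c \<Rightarrow> 'c)
   \<Rightarrow> ('s \<Rightarrow> 's \<Rightarrow> 's \<Rightarrow> int \<Rightarrow> int \<Rightarrow> 'c \<Rightarrow> 'c \<Rightarrow> 'c) \<Rightarrow> bool" where
  "geometric_chain_model Ch dim prd bd fp fpp \<longleftrightarrow>
     \<comment> \<open>each C_k(s) is a subgroup, concentrated in degrees [0, dim s]\<close>
     (\<forall>s k. 0 \<in> Ch s k \<and>
        (\<forall>x\<in>Ch s k. \<forall>y\<in>Ch s k. x + y \<in> Ch s k \<and> - x \<in> Ch s k)) \<and>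
     (\<forall>s k. (k < 0 \<or> k > int (dim s)) \<longrightarrow> Ch s k = {0}) \<and>
     \<comment> \<open>boundary: a homomorphism of degree -1 with square zero\<close>
     (\<forall>s k. \<forall>x\<in>Ch s k. bd s k x \<in> Ch s (k - 1)) \<and>
     (\<forall>s k. \<forall>x\<in>Ch s k. \<forall>y\<in>Ch s k. bd s k (x + y) = bd s k x + bd s k y) \<and>
     (\<forall>s k. \<forall>x\<in>Ch s k. bd s (k - 1) (bd s k x) = 0) \<and>
     \<comment> \<open>fiber product: degree, bilinearity\<close>
     (\<forall>M N p q. \<forall>\<phi>\<in>Ch M p. \<forall>W\<in>Ch (prd M N) q.
        fp M N p q \<phi> W \<in> Ch N (p + q - int (dim M))) \<and>
     (\<forall>M N p q. \<forall>\<phi>\<in>Ch M p. \<forall>\<psi>\<in>Ch M p. \<forall>W\<in>Ch (prd M N) q.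
        fp M N p q (\<phi> + \<psi>) W = fp M N p q \<phi> W + fp M N p q \<psi> W) \<and>
     (\<forall>M N p q. \<forall>\<phi>\<in>Ch M p. \<forall>W\<in>Ch (prd M N) q. \<forall>V\<in>Ch (prd M N) q.
        fp M N p q \<phi> (W + V) = fp M N p q \<phi> W + fp M N p q \<phi> V) \<and>
     (\<forall>X Z Y a b. \<forall>A\<in>Ch (prd X Z) a. \<forall>B\<in>Ch (prd Z Y) b.
        fpp X Z Y a b A B \<in> Ch (prd X Y) (a + b - int (dim Z))) \<and>
     \<comment> \<open>Leibniz rule: d(phi x_M W) = (d phi) x_M W + (-1)^(dim phi + dim M) phi x_M (d W)\<close>
     (\<forall>M N p q. \<forall>\<phi>\<in>Ch M p. \<forall>W\<in>Ch (prd M N) q.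
        bd N (p + q - int (dim M)) (fp M N p q \<phi> W) =
          fp M N (p - 1) q (bd M p \<phi>) W
          + signed (p + int (dim M)) (fp M N p (q - 1) \<phi> (bd (prd M N) q W))) \<and>
     \<comment> \<open>associativity: (phi x_X A) x_Z B = phi x_X (A x_Z B)\<close>
     (\<forall>X Z Y p a b. \<forall>\<phi>\<in>Ch X p. \<forall>A\<in>Ch (prd X Z) a. \<forall>B\<in>Ch (prd Z Y) b.
        fp Z Y (p + a - int (dim X)) b (fp X Z p a \<phi> A) B =
        fp X Y p (a + b - int (dim Z)) \<phi> (fpp X Z Y a b A B))"

text \<open>Finitely graded flow category (with the orientations of the objects and the elements of
  Lambda(X) fixed once and for all).  CC X Y q is the degree-q component of the chain C_XY in
  C_*(X x Y); its nonzero components sit in degrees congruent to dim X + ti(X,Y) - 1 mod 2N.\<close>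

definition finitely_graded_flow_category ::
  "('s \<Rightarrow> int \<Rightarrow> 'c::ab_group_add set) \<Rightarrow> ('s \<Rightarrow> nat) \<Rightarrow> ('s \<Rightarrow> 's \<Rightarrow> 's)
   \<Rightarrow> ('s \<Rightarrow> int \<Rightarrow> 'c \<Rightarrow> 'c)
   \<Rightarrow> ('s \<Rightarrow> 's \<Rightarrow> 's \<Rightarrow> int \<Rightarrow> int \<Rightarrow> 'c \<Rightarrow> 'c \<Rightarrow> 'c)
   \<Rightarrow> nat \<Rightarrow> 's set \<Rightarrow> ('s \<Rightarrow> 's \<Rightarrow> int) \<Rightarrow> ('s \<Rightarrow> 's \<Rightarrow> int \<Rightarrow> 'c) \<Rightarrow> bool" where
  "finitely_graded_flow_category Ch dim prd bd fpp N Ob ti CC \<longleftrightarrow>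
     finite Ob \<and>
     (\<forall>X\<in>Ob. \<forall>Y\<in>Ob. \<forall>Z\<in>Ob. [ti X Y + ti Y Z = ti X Z] (mod (2 * int N))) \<and>
     (\<forall>X\<in>Ob. \<forall>Y\<in>Ob. \<forall>q. CC X Y q \<in> Ch (prd X Y) q) \<and>
     (\<forall>X\<in>Ob. \<forall>Y\<in>Ob. \<forall>q. CC X Y q \<noteq> 0 \<longrightarrow>
        [q = int (dim X) + ti X Y - 1] (mod (2 * int N))) \<and>
     \<comment> \<open>(-1)^dim X d C_XY = sum_Z (-1)^ti(X,Z) C_XZ x_Z C_ZY, componentwise in degree q\<close>
     (\<forall>X\<in>Ob. \<forall>Y\<in>Ob. \<forall>q.
        signed (int (dim X)) (bd (prd X Y) (q + 1) (CC X Y (q + 1))) =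
        (\<Sum>Z\<in>Ob. signed (ti X Z)
           (\<Sum>a\<in>{0..int (dim (prd X Z))}.
              fpp X Z Y a (q - a + int (dim Z)) (CC X Z a) (CC Z Y (q - a + int (dim Z))))))"

definition flow_complex :: "('s \<Rightarrow> int \<Rightarrow> 'c::zero set) \<Rightarrow> 's set \<Rightarrow> ('s \<Rightarrow> int \<Rightarrow> 'c) set" where
  "flow_complex Ch Ob = {\<Phi>. \<forall>X k. \<Phi> X k \<in> (if X \<in> Ob then Ch X k else {0})}"

definition flow_differential ::
  "('s \<Rightarrow> nat) \<Rightarrow> ('s \<Rightarrow> int \<Rightarrow> 'c::ab_group_add \<Rightarrow> 'c)
   \<Rightarrow> ('s \<Rightarrow> 's \<Rightarrow> int \<Rightarrow> int \<Rightarrow> 'c \<Rightarrow> 'c \<Rightarrow> 'c)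
   \<Rightarrow> 's set \<Rightarrow> ('s \<Rightarrow> 's \<Rightarrow> int \<Rightarrow> 'c) \<Rightarrow> ('s \<Rightarrow> int \<Rightarrow> 'c) \<Rightarrow> ('s \<Rightarrow> int \<Rightarrow> 'c)" where
  "flow_differential dim bd fp Ob CC \<Phi> = (\<lambda>Y j.
     if Y \<in> Ob then
       bd Y (j + 1) (\<Phi> Y (j + 1)) +
       (\<Sum>X\<in>Ob. \<Sum>k\<in>{0..int (dim X)}.
          signed k (fp X Y k (j - k + int (dim X)) (\<Phi> X k) (CC X Y (j - k + int (dim X)))))
     else 0)"

definition single_chain :: "'s \<Rightarrow> int \<Rightarrow> 'c::zero \<Rightarrow> ('s \<Rightarrow> int \<Rightarrow> 'c)" where
  "single_chain X k \<phi> = (\<lambda>Y j. if Y = X \<and> j = k then \<phi> else 0)"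

end

theory Submission
  imports Defs
begin

text \<open>Write d = \<partial> + d_M. Since \<partial>\<partial> = 0, it suffices that \<partial>d_M + d_M\<partial> = - d_M d_M.
  By the Leibniz rule, \<partial>(\<phi> \<times>_X C_XY) = (\<partial>\<phi>) \<times>_X C_XY \<plusminus> \<phi> \<times>_X \<partial>C_XY; the first terms cancel
  against d_M\<partial>, because shifting dim \<phi> by one flips the sign (-1)^(dim \<phi>), and the remaining sign
  is (-1)^(dim X), exactly the one in the defining equation of the flow category. That equation and
  associativity turn \<phi> \<times>_X (-1)^(dim X) \<partial>C_XY into \<Sum>_Z (-1)^ti(X,Z) (\<phi> \<times>_X C_XZ) \<times>_Z C_ZY, while
  d_M d_M \<phi> consists of the same iterated fiber products with sign (-1)^(dim \<phi> + dim(\<phi> \<times>_X C_XZ)).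
  The grading of C_XZ makes these two signs opposite whenever the term is nonzero.\<close>

lemma signed_signed [simp]: "signed a (signed b x) = signed (a + b) x"
  by (auto simp: signed_def)

lemma signed_zero [simp]: "signed e 0 = 0"
  by (simp add: signed_def)

lemma signed_add: "signed e (x + y) = signed e x + signed e y"
  by (simp add: signed_def)

lemma signed_sum: "signed e (sum f A) = (\<Sum>i\<in>A. signed e (f i))"
  by (simp add: signed_def sum_negf)

lemma signed_plus_one: "signed (e + 1) x = - signed e x"
  by (simp add: signed_def)

lemma signed_cong_parity: "even (a - b) \<Longrightarrow> signed a x = signed b x"
  by (auto simp: signed_def)

lemma sum_int_interval_shift:
  fixes a b c :: int
  shows "(\<Sum>k\<in>{a..b}. g k) = (\<Sum>k\<in>{a + c..b + c}. g (k - c))"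
  by (rule sum.reindex_bij_witness[of _ "\<lambda>k. k - c" "\<lambda>k. k + c"]) auto

lemma sum_nested_swap:
  assumes "finite A" "\<And>x. x \<in> A \<Longrightarrow> finite (B x)"
  shows "(\<Sum>x\<in>A. \<Sum>y\<in>B x. \<Sum>u\<in>A. \<Sum>v\<in>B u. f x y u v)
       = (\<Sum>u\<in>A. \<Sum>v\<in>B u. \<Sum>x\<in>A. \<Sum>y\<in>B x. f x y u v)"
proof -
  have flatten: "(\<Sum>x\<in>A. \<Sum>y\<in>B x. g x y) = (\<Sum>z\<in>Sigma A B. g (fst z) (snd z))"
    for g :: "_ \<Rightarrow> _ \<Rightarrow> 'z::comm_monoid_add"
    using assms by (simp add: sum.Sigma split_def)
  show ?thesis
    unfolding flatten by (rule sum.swap)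
qed

locale geometric_chains =
  fixes Ch :: "'s \<Rightarrow> int \<Rightarrow> 'c::ab_group_add set"
    and dim :: "'s \<Rightarrow> nat" and prd :: "'s \<Rightarrow> 's \<Rightarrow> 's"
    and bd :: "'s \<Rightarrow> int \<Rightarrow> 'c \<Rightarrow> 'c"
    and fp :: "'s \<Rightarrow> 's \<Rightarrow> int \<Rightarrow> int \<Rightarrow> 'c \<Rightarrow> 'c \<Rightarrow> 'c"
    and fpp :: "'s \<Rightarrow> 's \<Rightarrow> 's \<Rightarrow> int \<Rightarrow> int \<Rightarrow> 'c \<Rightarrow> 'c \<Rightarrow> 'c"
  assumes chain_model: "geometric_chain_model Ch dim prd bd fp fpp"
begin

lemma chain_zero [simp]: "0 \<in> Ch s k"
  using chain_model by (simp add: geometric_chain_model_def)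

lemma chain_add: "x \<in> Ch s k \<Longrightarrow> y \<in> Ch s k \<Longrightarrow> x + y \<in> Ch s k"
  using chain_model by (simp add: geometric_chain_model_def)

lemma chain_uminus: "x \<in> Ch s k \<Longrightarrow> - x \<in> Ch s k"
  using chain_model by (simp add: geometric_chain_model_def)

lemma chain_out_of_range:
  assumes "x \<in> Ch s k" and "k < 0 \<or> int (dim s) < k"
  shows "x = 0"
proof -
  have "Ch s k = {0}"
    using assms(2) chain_model unfolding geometric_chain_model_def
    by (metis (no_types, lifting))
  then show ?thesis
    using assms(1) by simp
qed

lemma boundary_closed: "x \<in> Ch s (k + 1) \<Longrightarrow> bd s (k + 1) x \<in> Ch s k"
  using chain_model unfolding geometric_chain_model_def by (metis add_diff_cancel_right')

lemma boundary_add: "x \<in> Ch s k \<Longrightarrow> y \<in> Ch s k \<Longrightarrow> bd s k (x + y) = bd s k x + bd s k y"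
  using chain_model by (simp add: geometric_chain_model_def)

lemma boundary_boundary: "x \<in> Ch s (k + 1) \<Longrightarrow> bd s k (bd s (k + 1) x) = 0"
  using chain_model unfolding geometric_chain_model_def by (metis add_diff_cancel_right')

lemma fiber_closed:
  "\<phi> \<in> Ch M p \<Longrightarrow> W \<in> Ch (prd M N) q \<Longrightarrow> r = p + q - int (dim M) \<Longrightarrow> fp M N p q \<phi> W \<in> Ch N r"
  using chain_model by (simp add: geometric_chain_model_def)

lemma fiber_add_left: "\<phi> \<in> Ch M p \<Longrightarrow> \<psi> \<in> Ch M p \<Longrightarrow> W \<in> Ch (prd M N) q \<Longrightarrow>
    fp M N p q (\<phi> + \<psi>) W = fp M N p q \<phi> W + fp M N p q \<psi> W"
  using chain_model by (simp add: geometric_chain_model_def)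

lemma fiber_add_right: "\<phi> \<in> Ch M p \<Longrightarrow> W \<in> Ch (prd M N) q \<Longrightarrow> V \<in> Ch (prd M N) q \<Longrightarrow>
    fp M N p q \<phi> (W + V) = fp M N p q \<phi> W + fp M N p q \<phi> V"
  using chain_model by (simp add: geometric_chain_model_def)

lemma fiber_product_closed: "A \<in> Ch (prd X Z) a \<Longrightarrow> B \<in> Ch (prd Z Y) b \<Longrightarrow>
    r = a + b - int (dim Z) \<Longrightarrow> fpp X Z Y a b A B \<in> Ch (prd X Y) r"
  using chain_model by (simp add: geometric_chain_model_def)

lemma fiber_leibniz: "\<phi> \<in> Ch M p \<Longrightarrow> W \<in> Ch (prd M N) q \<Longrightarrow> r = p + q - int (dim M) \<Longrightarrow>
    bd N r (fp M N p q \<phi> W) =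
      fp M N (p - 1) q (bd M p \<phi>) W + signed (p + int (dim M)) (fp M N p (q - 1) \<phi> (bd (prd M N) q W))"
  using chain_model by (simp add: geometric_chain_model_def)

lemma fiber_assoc: "\<phi> \<in> Ch X p \<Longrightarrow> A \<in> Ch (prd X Z) a \<Longrightarrow> B \<in> Ch (prd Z Y) b \<Longrightarrow>
    c = a + b - int (dim Z) \<Longrightarrow>
    fp X Y p c \<phi> (fpp X Z Y a b A B) = fp Z Y (p + a - int (dim X)) b (fp X Z p a \<phi> A) B"
  using chain_model by (simp add: geometric_chain_model_def)

lemma chain_sum: "(\<And>i. i \<in> A \<Longrightarrow> f i \<in> Ch s k) \<Longrightarrow> sum f A \<in> Ch s k"
  by (induction A rule: infinite_finite_induct) (auto intro: chain_add)

lemma chain_signed: "x \<in> Ch s k \<Longrightarrow> signed e x \<in> Ch s k"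
  by (simp add: signed_def chain_uminus)

lemma boundary_zero [simp]: "bd s k 0 = 0"
  using boundary_add[of 0 s k 0] by simp

lemma boundary_uminus: "x \<in> Ch s k \<Longrightarrow> bd s k (- x) = - bd s k x"
  using boundary_add[of x s k "- x"] chain_uminus[of x s k] by (simp add: eq_neg_iff_add_eq_0 add.commute)

lemma boundary_signed: "x \<in> Ch s k \<Longrightarrow> bd s k (signed e x) = signed e (bd s k x)"
  by (simp add: signed_def boundary_uminus)

lemma boundary_sum:
  "(\<And>i. i \<in> A \<Longrightarrow> f i \<in> Ch s k) \<Longrightarrow> bd s k (sum f A) = (\<Sum>i\<in>A. bd s k (f i))"
  by (induction A rule: infinite_finite_induct) (auto simp: boundary_add chain_sum)

lemma fiber_zero_left [simp]: "W \<in> Ch (prd M N) q \<Longrightarrow> fp M N p q 0 W = 0"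
  using fiber_add_left[of 0 M p 0 W N q] by simp

lemma fiber_zero_right [simp]: "\<phi> \<in> Ch M p \<Longrightarrow> fp M N p q \<phi> 0 = 0"
  using fiber_add_right[of \<phi> M p 0 N q 0] by simp

lemma fiber_uminus_left:
  "\<phi> \<in> Ch M p \<Longrightarrow> W \<in> Ch (prd M N) q \<Longrightarrow> fp M N p q (- \<phi>) W = - fp M N p q \<phi> W"
  using fiber_add_left[of \<phi> M p "- \<phi>" W N q] chain_uminus[of \<phi> M p]
  by (simp add: eq_neg_iff_add_eq_0 add.commute)

lemma fiber_uminus_right:
  "\<phi> \<in> Ch M p \<Longrightarrow> W \<in> Ch (prd M N) q \<Longrightarrow> fp M N p q \<phi> (- W) = - fp M N p q \<phi> W"
  using fiber_add_right[of \<phi> M p W N q "- W"] chain_uminus[of W "prd M N" q]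
  by (simp add: eq_neg_iff_add_eq_0 add.commute)

lemma fiber_signed_left: "\<phi> \<in> Ch M p \<Longrightarrow> W \<in> Ch (prd M N) q \<Longrightarrow>
    fp M N p q (signed e \<phi>) W = signed e (fp M N p q \<phi> W)"
  by (simp add: signed_def fiber_uminus_left)

lemma fiber_signed_right: "\<phi> \<in> Ch M p \<Longrightarrow> W \<in> Ch (prd M N) q \<Longrightarrow>
    fp M N p q \<phi> (signed e W) = signed e (fp M N p q \<phi> W)"
  by (simp add: signed_def fiber_uminus_right)

lemma fiber_sum_left: "(\<And>i. i \<in> A \<Longrightarrow> f i \<in> Ch M p) \<Longrightarrow> W \<in> Ch (prd M N) q \<Longrightarrow>
    fp M N p q (sum f A) W = (\<Sum>i\<in>A. fp M N p q (f i) W)"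
  by (induction A rule: infinite_finite_induct) (auto simp: fiber_add_left chain_sum)

lemma fiber_sum_right: "\<phi> \<in> Ch M p \<Longrightarrow> (\<And>i. i \<in> A \<Longrightarrow> f i \<in> Ch (prd M N) q) \<Longrightarrow>
    fp M N p q \<phi> (sum f A) = (\<Sum>i\<in>A. fp M N p q \<phi> (f i))"
  by (induction A rule: infinite_finite_induct) (auto simp: fiber_add_right chain_sum)

end


lemma flow_complex_component: "\<Phi> \<in> flow_complex Ch Ob \<Longrightarrow> X \<in> Ob \<Longrightarrow> \<Phi> X k \<in> Ch X k"
  unfolding flow_complex_def by (metis (mono_tags, lifting) mem_Collect_eq)

lemma flow_complex_outside: "\<Phi> \<in> flow_complex Ch Ob \<Longrightarrow> X \<notin> Ob \<Longrightarrow> \<Phi> X k = 0"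
  unfolding flow_complex_def by (metis (mono_tags, lifting) mem_Collect_eq singletonD)

lemma flow_complexI:
  "(\<And>X k. X \<in> Ob \<Longrightarrow> \<Phi> X k \<in> Ch X k) \<Longrightarrow> (\<And>X k. X \<notin> Ob \<Longrightarrow> \<Phi> X k = 0)
   \<Longrightarrow> \<Phi> \<in> flow_complex Ch Ob"
  unfolding flow_complex_def by simp

locale flow_category = geometric_chains Ch dim prd bd fp fpp
  for Ch :: "'s \<Rightarrow> int \<Rightarrow> 'c::ab_group_add set"
    and dim :: "'s \<Rightarrow> nat" and prd :: "'s \<Rightarrow> 's \<Rightarrow> 's"
    and bd :: "'s \<Rightarrow> int \<Rightarrow> 'c \<Rightarrow> 'c"
    and fp :: "'s \<Rightarrow> 's \<Rightarrow> int \<Rightarrow> int \<Rightarrow> 'c \<Rightarrow> 'c \<Rightarrow> 'c"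
    and fpp :: "'s \<Rightarrow> 's \<Rightarrow> 's \<Rightarrow> int \<Rightarrow> int \<Rightarrow> 'c \<Rightarrow> 'c \<Rightarrow> 'c" +
  fixes N :: nat and Ob :: "'s set" and ti :: "'s \<Rightarrow> 's \<Rightarrow> int"
    and CC :: "'s \<Rightarrow> 's \<Rightarrow> int \<Rightarrow> 'c"
  assumes flow_category: "finitely_graded_flow_category Ch dim prd bd fpp N Ob ti CC"
begin

lemma finite_objects [simp]: "finite Ob"
  using flow_category by (simp add: finitely_graded_flow_category_def)

lemma ti_cocycle:
  "X \<in> Ob \<Longrightarrow> Y \<in> Ob \<Longrightarrow> Z \<in> Ob \<Longrightarrow> [ti X Y + ti Y Z = ti X Z] (mod (2 * int N))"
  using flow_category by (simp add: finitely_graded_flow_category_def)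

lemma flow_chain_closed [simp]: "X \<in> Ob \<Longrightarrow> Y \<in> Ob \<Longrightarrow> CC X Y q \<in> Ch (prd X Y) q"
  using flow_category by (simp add: finitely_graded_flow_category_def)

lemma flow_chain_degree: "X \<in> Ob \<Longrightarrow> Y \<in> Ob \<Longrightarrow> CC X Y q \<noteq> 0 \<Longrightarrow>
    [q = int (dim X) + ti X Y - 1] (mod (2 * int N))"
  using flow_category by (simp add: finitely_graded_flow_category_def)

lemma flow_equation: "X \<in> Ob \<Longrightarrow> Y \<in> Ob \<Longrightarrow>
    signed (int (dim X)) (bd (prd X Y) (q + 1) (CC X Y (q + 1))) =
    (\<Sum>Z\<in>Ob. signed (ti X Z) (\<Sum>a\<in>{0..int (dim (prd X Z))}.
       fpp X Z Y a (q - a + int (dim Z)) (CC X Z a) (CC Z Y (q - a + int (dim Z)))))"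
  using flow_category by (simp add: finitely_graded_flow_category_def)

lemma flow_chain_parity:
  assumes "X \<in> Ob" "Y \<in> Ob" "CC X Y q \<noteq> 0"
  shows "even (q - int (dim X) - ti X Y + 1)"
proof -
  have "2 * int N dvd q - (int (dim X) + ti X Y - 1)"
    using flow_chain_degree[OF assms] by (simp add: cong_iff_dvd_diff)
  then show ?thesis
    by (metis (no_types, lifting) diff_diff_eq2 diff_diff_eq dvd_mult_left diff_add_eq)
qed

abbreviation CM where "CM \<equiv> flow_complex Ch Ob"

abbreviation D where "D \<equiv> flow_differential dim bd fp Ob CC"

definition chain_boundary :: "('s \<Rightarrow> int \<Rightarrow> 'c) \<Rightarrow> 's \<Rightarrow> int \<Rightarrow> 'c" where
  "chain_boundary \<Phi> = (\<lambda>Y j. bd Y (j + 1) (\<Phi> Y (j + 1)))"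

text \<open>Unlike the boundary, d_M needs the guard Y \<in> Ob: the chains CC X Y are arbitrary for Y \<notin> Ob.\<close>

definition d_M :: "('s \<Rightarrow> int \<Rightarrow> 'c) \<Rightarrow> 's \<Rightarrow> int \<Rightarrow> 'c" where
  "d_M \<Phi> = (\<lambda>Y j. if Y \<in> Ob then
     (\<Sum>X\<in>Ob. \<Sum>k\<in>{0..int (dim X)}.
        signed k (fp X Y k (j - k + int (dim X)) (\<Phi> X k) (CC X Y (j - k + int (dim X)))))
     else 0)"

lemma flow_complex_chain: "\<Phi> \<in> CM \<Longrightarrow> \<Phi> X k \<in> Ch X k"
  by (cases "X \<in> Ob") (simp_all add: flow_complex_component flow_complex_outside)

lemma flow_differential_eq: "\<Phi> \<in> CM \<Longrightarrow> D \<Phi> = (\<lambda>Y j. chain_boundary \<Phi> Y j + d_M \<Phi> Y j)"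
  by (intro ext) (simp add: flow_differential_def chain_boundary_def d_M_def flow_complex_outside)

lemma flow_complex_add: "\<Phi> \<in> CM \<Longrightarrow> \<Psi> \<in> CM \<Longrightarrow> (\<lambda>X k. \<Phi> X k + \<Psi> X k) \<in> CM"
  by (auto intro!: flow_complexI chain_add simp: flow_complex_component flow_complex_outside)

lemma chain_boundary_closed: "\<Phi> \<in> CM \<Longrightarrow> chain_boundary \<Phi> \<in> CM"
  by (auto intro!: flow_complexI boundary_closed
      simp: chain_boundary_def flow_complex_component flow_complex_outside)

lemma d_M_closed: "\<Phi> \<in> CM \<Longrightarrow> d_M \<Phi> \<in> CM"
  by (auto intro!: flow_complexI chain_sum chain_signed fiber_closed
      simp: d_M_def flow_complex_component)

lemma chain_boundary_add: "\<Phi> \<in> CM \<Longrightarrow> \<Psi> \<in> CM \<Longrightarrow>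
    chain_boundary (\<lambda>X k. \<Phi> X k + \<Psi> X k) = (\<lambda>Y j. chain_boundary \<Phi> Y j + chain_boundary \<Psi> Y j)"
  unfolding chain_boundary_def by (intro ext boundary_add flow_complex_chain)

lemma d_M_add: "\<Phi> \<in> CM \<Longrightarrow> \<Psi> \<in> CM \<Longrightarrow>
    d_M (\<lambda>X k. \<Phi> X k + \<Psi> X k) = (\<lambda>Y j. d_M \<Phi> Y j + d_M \<Psi> Y j)"
  by (intro ext)
    (simp add: d_M_def fiber_add_left flow_complex_component signed_add sum.distrib)

lemma chain_boundary_chain_boundary: "\<Phi> \<in> CM \<Longrightarrow> chain_boundary (chain_boundary \<Phi>) = (\<lambda>Y j. 0)"
  unfolding chain_boundary_def by (intro ext boundary_boundary flow_complex_chain)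

lemma flow_differential_closed: "\<Phi> \<in> CM \<Longrightarrow> D \<Phi> \<in> CM"
  by (simp add: flow_differential_eq flow_complex_add chain_boundary_closed d_M_closed)

lemma flow_differential_add: "\<Phi> \<in> CM \<Longrightarrow> \<Psi> \<in> CM \<Longrightarrow>
    D (\<lambda>X k. \<Phi> X k + \<Psi> X k) = (\<lambda>Y j. D \<Phi> Y j + D \<Psi> Y j)"
  by (simp add: flow_differential_eq flow_complex_add chain_boundary_add d_M_add algebra_simps)

lemma single_chain_in_flow_complex: "X \<in> Ob \<Longrightarrow> \<phi> \<in> Ch X k \<Longrightarrow> single_chain X k \<phi> \<in> CM"
  by (auto intro!: flow_complexI simp: single_chain_def)

lemma flow_differential_single_chain_degree:
  assumes X: "X \<in> Ob" and \<phi>: "\<phi> \<in> Ch X k" and Y: "Y \<in> Ob"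
    and nonzero: "D (single_chain X k \<phi>) Y j \<noteq> 0"
  shows "[k - j + ti X Y = 1] (mod (2 * int N))"
proof -
  let ?\<Phi> = "single_chain X k \<phi>"
  have \<Phi>: "?\<Phi> \<in> CM"
    using X \<phi> by (rule single_chain_in_flow_complex)
  consider "chain_boundary ?\<Phi> Y j \<noteq> 0" | "d_M ?\<Phi> Y j \<noteq> 0"
  proof -
    have "chain_boundary ?\<Phi> Y j + d_M ?\<Phi> Y j \<noteq> 0"
      using nonzero by (simp add: flow_differential_eq[OF \<Phi>])
    then show thesis
      using that by fastforce
  qed
  then show ?thesis
  proof cases
    case 1
    then have "Y = X" "k = j + 1"
      by (auto simp: chain_boundary_def single_chain_def split: if_splits)
    moreover have "[ti X X = 0] (mod (2 * int N))"
      using ti_cocycle[OF X X X] by (simp add: cong_iff_dvd_diff)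
    ultimately show ?thesis
      by (simp add: cong_iff_dvd_diff)
  next
    case 2
    then obtain X' k' where X': "X' \<in> Ob" and
      "signed k' (fp X' Y k' (j - k' + int (dim X')) (?\<Phi> X' k') (CC X' Y (j - k' + int (dim X')))) \<noteq> 0"
      using Y unfolding d_M_def by (meson sum.neutral)
    then have "X' = X" "k' = k" and "CC X Y (j - k + int (dim X)) \<noteq> 0"
      using X' Y \<phi> by (auto simp: single_chain_def split: if_splits)
    then have "2 * int N dvd (j - k + int (dim X)) - (int (dim X) + ti X Y - 1)"
      using flow_chain_degree[OF X Y] cong_iff_dvd_diff by blast
    then have "2 * int N dvd - ((k - j + ti X Y) - 1)"
      by (simp add: algebra_simps)
    then show ?thesis
      by (simp only: cong_iff_dvd_diff dvd_minus_iff)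
  qed
qed

lemma fiber_boundary_shift:
  assumes \<Phi>: "\<Phi> \<in> CM" and X: "X \<in> Ob" and Y: "Y \<in> Ob"
  defines "d \<equiv> int (dim X)"
  shows "(\<Sum>k\<in>{0..d}. signed k (fp X Y (k - 1) (j + 1 - k + d) (bd X k (\<Phi> X k)) (CC X Y (j + 1 - k + d))))
       = - (\<Sum>k\<in>{0..d}. signed k (fp X Y k (j - k + d) (bd X (k + 1) (\<Phi> X (k + 1))) (CC X Y (j - k + d))))"
proof -
  define F where "F k = signed k (fp X Y k (j - k + d) (bd X (k + 1) (\<Phi> X (k + 1))) (CC X Y (j - k + d)))"
    for k
  have boundary_vanishes: "bd X (k + 1) (\<Phi> X (k + 1)) = 0" if "k \<notin> {0..d - 1}" for k
  proof (cases "k < 0")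
    case True
    then show ?thesis
      using boundary_closed[OF flow_complex_chain[OF \<Phi>]] chain_out_of_range by blast
  next
    case False
    then have "\<Phi> X (k + 1) = 0"
      using that flow_complex_chain[OF \<Phi>] chain_out_of_range unfolding d_def by force
    then show ?thesis by simp
  qed
  have "(\<Sum>k\<in>{0..d}. signed k (fp X Y (k - 1) (j + 1 - k + d) (bd X k (\<Phi> X k)) (CC X Y (j + 1 - k + d))))
      = (\<Sum>k\<in>{-1..d - 1}. - F k)"
    by (subst sum_int_interval_shift[where c = "-1"]) (simp add: F_def signed_plus_one algebra_simps)
  also have "\<dots> = - (\<Sum>k\<in>{0..d}. F k)"
    unfolding sum_negf
    by (intro arg_cong[where f = uminus] sum.mono_neutral_cong) (auto simp: F_def boundary_vanishes X Y)
  finally show ?thesis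
    unfolding F_def .
qed

definition fiber_boundary_flow :: "('s \<Rightarrow> int \<Rightarrow> 'c) \<Rightarrow> 's \<Rightarrow> int \<Rightarrow> 'c" where
  "fiber_boundary_flow \<Phi> Y j = (\<Sum>X\<in>Ob. \<Sum>k\<in>{0..int (dim X)}.
     fp X Y k (j - k + int (dim X)) (\<Phi> X k)
       (signed (int (dim X)) (bd (prd X Y) (j - k + int (dim X) + 1) (CC X Y (j - k + int (dim X) + 1)))))"

lemma boundary_fiber_flow_chain:
  assumes \<phi>: "\<phi> \<in> Ch X k" and X: "X \<in> Ob" and Y: "Y \<in> Ob"
  defines "d \<equiv> int (dim X)"
  shows "signed k (bd Y (j + 1) (fp X Y k (j + 1 - k + d) \<phi> (CC X Y (j + 1 - k + d))))
       = signed k (fp X Y (k - 1) (j + 1 - k + d) (bd X k \<phi>) (CC X Y (j + 1 - k + d)))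
         + fp X Y k (j - k + d) \<phi> (signed d (bd (prd X Y) (j - k + d + 1) (CC X Y (j - k + d + 1))))"
proof -
  have index: "j + 1 - k + d - 1 = j - k + d" "j - k + d + 1 = j + 1 - k + d"
    by simp_all
  have degree: "j + 1 = k + (j + 1 - k + d) - int (dim X)"
    by (simp add: d_def)
  have boundary_in: "bd (prd X Y) (j + 1 - k + d) (CC X Y (j + 1 - k + d)) \<in> Ch (prd X Y) (j - k + d)"
    using boundary_closed[OF flow_chain_closed[OF X Y], of "j - k + d"] unfolding index(2) .
  have leibniz: "bd Y (j + 1) (fp X Y k (j + 1 - k + d) \<phi> (CC X Y (j + 1 - k + d)))
      = fp X Y (k - 1) (j + 1 - k + d) (bd X k \<phi>) (CC X Y (j + 1 - k + d))
        + signed (k + d) (fp X Y k (j - k + d) \<phi> (bd (prd X Y) (j + 1 - k + d) (CC X Y (j + 1 - k + d))))"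
    using fiber_leibniz[OF \<phi> flow_chain_closed[OF X Y] degree] unfolding index(1) d_def[symmetric] .
  have parity: "signed k (signed (k + d) x) = signed d x" for x
    unfolding signed_signed by (rule signed_cong_parity) simp
  show ?thesis
    unfolding index(2) leibniz signed_add parity fiber_signed_right[OF \<phi> boundary_in] ..
qed

lemma boundary_d_M_anticommute:
  assumes \<Phi>: "\<Phi> \<in> CM" and Y: "Y \<in> Ob"
  shows "chain_boundary (d_M \<Phi>) Y j + d_M (chain_boundary \<Phi>) Y j = fiber_boundary_flow \<Phi> Y j"
proof -
  have "chain_boundary (d_M \<Phi>) Y j = (\<Sum>X\<in>Ob. \<Sum>k\<in>{0..int (dim X)}.
      signed k (bd Y (j + 1) (fp X Y k (j + 1 - k + int (dim X)) (\<Phi> X k) (CC X Y (j + 1 - k + int (dim X))))))"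
    using Y by (simp add: chain_boundary_def d_M_def boundary_sum boundary_signed chain_sum chain_signed
        fiber_closed flow_complex_chain[OF \<Phi>])
  also have "\<dots> = (\<Sum>X\<in>Ob. \<Sum>k\<in>{0..int (dim X)}.
      signed k (fp X Y (k - 1) (j + 1 - k + int (dim X)) (bd X k (\<Phi> X k)) (CC X Y (j + 1 - k + int (dim X)))))
    + fiber_boundary_flow \<Phi> Y j"
    unfolding fiber_boundary_flow_def sum.distrib[symmetric]
    by (intro sum.cong refl boundary_fiber_flow_chain flow_complex_chain[OF \<Phi>] Y)
  also have "\<dots> = - d_M (chain_boundary \<Phi>) Y j + fiber_boundary_flow \<Phi> Y j"
    using Y by (simp add: d_M_def chain_boundary_def fiber_boundary_shift[OF \<Phi> _ Y] sum_negf)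
  finally show ?thesis
    by simp
qed

definition double_fiber :: "('s \<Rightarrow> int \<Rightarrow> 'c) \<Rightarrow> 's \<Rightarrow> int \<Rightarrow> 's \<Rightarrow> 's \<Rightarrow> int \<Rightarrow> int \<Rightarrow> 'c" where
  "double_fiber \<Phi> Y j X Z m k = fp Z Y k (j - k + int (dim Z))
     (fp X Z m (k - m + int (dim X)) (\<Phi> X m) (CC X Z (k - m + int (dim X)))) (CC Z Y (j - k + int (dim Z)))"

lemma d_M_d_M_expand:
  assumes \<Phi>: "\<Phi> \<in> CM" and Y: "Y \<in> Ob"
  shows "d_M (d_M \<Phi>) Y j = (\<Sum>Z\<in>Ob. \<Sum>k\<in>{0..int (dim Z)}. \<Sum>X\<in>Ob. \<Sum>m\<in>{0..int (dim X)}.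
           signed (k + m) (double_fiber \<Phi> Y j X Z m k))"
  using Y by (simp add: d_M_def double_fiber_def fiber_sum_left fiber_signed_left signed_sum
      chain_sum chain_signed fiber_closed flow_complex_chain[OF \<Phi>])

lemma double_fiber_vanishes:
  assumes \<Phi>: "\<Phi> \<in> CM" and X: "X \<in> Ob" and Y: "Y \<in> Ob" and Z: "Z \<in> Ob"
    and k: "k \<notin> {0..int (dim Z)} \<inter> {m - int (dim X)..m - int (dim X) + int (dim (prd X Z))}"
  shows "double_fiber \<Phi> Y j X Z m k = 0"
proof (cases "k \<in> {0..int (dim Z)}")
  case True
  then have "k - m + int (dim X) < 0 \<or> int (dim (prd X Z)) < k - m + int (dim X)"
    using k by auto
  then have "CC X Z (k - m + int (dim X)) = 0"
    using flow_chain_closed[OF X Z] chain_out_of_range by blast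
  then show ?thesis
    by (simp add: double_fiber_def flow_complex_chain[OF \<Phi>] Y Z)
next
  case False
  have "fp X Z m (k - m + int (dim X)) (\<Phi> X m) (CC X Z (k - m + int (dim X))) \<in> Ch Z k"
    by (rule fiber_closed[OF flow_complex_chain[OF \<Phi>] flow_chain_closed[OF X Z]]) simp
  then have "fp X Z m (k - m + int (dim X)) (\<Phi> X m) (CC X Z (k - m + int (dim X))) = 0"
    using False chain_out_of_range by auto
  then show ?thesis
    by (simp add: double_fiber_def Y Z)
qed

lemma double_fiber_sign:
  assumes \<Phi>: "\<Phi> \<in> CM" and X: "X \<in> Ob" and Y: "Y \<in> Ob" and Z: "Z \<in> Ob"
  shows "signed (k + m) (double_fiber \<Phi> Y j X Z m k) = - signed (ti X Z) (double_fiber \<Phi> Y j X Z m k)"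
proof (cases "CC X Z (k - m + int (dim X)) = 0")
  case True
  then show ?thesis
    by (simp add: double_fiber_def flow_complex_chain[OF \<Phi>] Y Z)
next
  case False
  then have "even (k - m + int (dim X) - int (dim X) - ti X Z + 1)"
    by (rule flow_chain_parity[OF X Z])
  then have "signed (k + m) x = signed (ti X Z + 1) x" for x
    by (intro signed_cong_parity) presburger
  then show ?thesis
    by (simp add: signed_plus_one)
qed

lemma fiber_boundary_flow_summand:
  assumes \<Phi>: "\<Phi> \<in> CM" and X: "X \<in> Ob" and Y: "Y \<in> Ob"
  shows "fp X Y m (j - m + int (dim X)) (\<Phi> X m)
           (signed (int (dim X)) (bd (prd X Y) (j - m + int (dim X) + 1) (CC X Y (j - m + int (dim X) + 1))))
       = (\<Sum>Z\<in>Ob. \<Sum>k\<in>{0..int (dim Z)}. signed (ti X Z) (double_fiber \<Phi> Y j X Z m k))"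
proof -
  define p where "p = j - m + int (dim X)"
  have \<phi>: "\<Phi> X m \<in> Ch X m"
    by (rule flow_complex_chain[OF \<Phi>])
  have fpp_in: "fpp X Z Y a (p - a + int (dim Z)) (CC X Z a) (CC Z Y (p - a + int (dim Z))) \<in> Ch (prd X Y) p"
    if "Z \<in> Ob" for Z a
    by (rule fiber_product_closed) (simp_all add: X Y that)
  have "fp X Y m p (\<Phi> X m) (signed (int (dim X)) (bd (prd X Y) (p + 1) (CC X Y (p + 1))))
      = fp X Y m p (\<Phi> X m) (\<Sum>Z\<in>Ob. signed (ti X Z) (\<Sum>a\<in>{0..int (dim (prd X Z))}.
          fpp X Z Y a (p - a + int (dim Z)) (CC X Z a) (CC Z Y (p - a + int (dim Z)))))"
    unfolding flow_equation[OF X Y] ..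
  also have "\<dots> = (\<Sum>Z\<in>Ob. signed (ti X Z) (\<Sum>a\<in>{0..int (dim (prd X Z))}.
          fp X Y m p (\<Phi> X m) (fpp X Z Y a (p - a + int (dim Z)) (CC X Z a) (CC Z Y (p - a + int (dim Z))))))"
    by (simp add: fiber_sum_right fiber_signed_right chain_sum chain_signed fpp_in \<phi>)
  also have "\<dots> = (\<Sum>Z\<in>Ob. signed (ti X Z) (\<Sum>a\<in>{0..int (dim (prd X Z))}.
          fp Z Y (m + a - int (dim X)) (p - a + int (dim Z)) (fp X Z m a (\<Phi> X m) (CC X Z a))
            (CC Z Y (p - a + int (dim Z)))))"
    by (intro sum.cong refl arg_cong[where f = "signed _"] fiber_assoc[OF \<phi>]) (simp_all add: X Y)
  also have "\<dots> = (\<Sum>Z\<in>Ob. signed (ti X Z)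
      (\<Sum>k\<in>{m - int (dim X)..m - int (dim X) + int (dim (prd X Z))}. double_fiber \<Phi> Y j X Z m k))"
    by (rule sum.cong[OF refl], rule arg_cong[where f = "signed _"],
        subst sum_int_interval_shift[where c = "m - int (dim X)"])
      (simp add: double_fiber_def p_def algebra_simps)
  also have "\<dots> = (\<Sum>Z\<in>Ob. signed (ti X Z) (\<Sum>k\<in>{0..int (dim Z)}. double_fiber \<Phi> Y j X Z m k))"
    by (rule sum.cong[OF refl], rule arg_cong[where f = "signed _"], rule sum.mono_neutral_cong)
      (auto intro: double_fiber_vanishes[OF \<Phi> X Y])
  finally show ?thesis
    by (simp add: p_def signed_sum)
qed

lemma d_M_d_M:
  assumes \<Phi>: "\<Phi> \<in> CM" and Y: "Y \<in> Ob"
  shows "d_M (d_M \<Phi>) Y j = - fiber_boundary_flow \<Phi> Y j"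
proof -
  have "d_M (d_M \<Phi>) Y j = (\<Sum>X\<in>Ob. \<Sum>m\<in>{0..int (dim X)}. \<Sum>Z\<in>Ob. \<Sum>k\<in>{0..int (dim Z)}.
      signed (k + m) (double_fiber \<Phi> Y j X Z m k))"
    unfolding d_M_d_M_expand[OF \<Phi> Y] by (rule sum_nested_swap) simp_all
  also have "\<dots> = - (\<Sum>X\<in>Ob. \<Sum>m\<in>{0..int (dim X)}. \<Sum>Z\<in>Ob. \<Sum>k\<in>{0..int (dim Z)}.
      signed (ti X Z) (double_fiber \<Phi> Y j X Z m k))"
    by (simp add: double_fiber_sign[OF \<Phi> _ Y] sum_negf)
  also have "\<dots> = - fiber_boundary_flow \<Phi> Y j"
    by (simp add: fiber_boundary_flow_def fiber_boundary_flow_summand[OF \<Phi> _ Y])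
  finally show ?thesis .
qed

lemma flow_differential_squared: "\<Phi> \<in> CM \<Longrightarrow> D (D \<Phi>) = (\<lambda>Y j. 0)"
proof (intro ext)
  fix Y j
  assume \<Phi>: "\<Phi> \<in> CM"
  show "D (D \<Phi>) Y j = 0"
  proof (cases "Y \<in> Ob")
    case Y: True
    have "D (D \<Phi>) Y j = chain_boundary (chain_boundary \<Phi>) Y j
        + (chain_boundary (d_M \<Phi>) Y j + d_M (chain_boundary \<Phi>) Y j) + d_M (d_M \<Phi>) Y j"
      unfolding fun_cong[OF fun_cong[OF flow_differential_eq[OF flow_differential_closed[OF \<Phi>]]]]
      unfolding flow_differential_eq[OF \<Phi>] chain_boundary_add[OF chain_boundary_closed[OF \<Phi>] d_M_closed[OF \<Phi>]]
        d_M_add[OF chain_boundary_closed[OF \<Phi>] d_M_closed[OF \<Phi>]]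
      by (simp add: algebra_simps)
    then show ?thesis
      by (simp add: chain_boundary_chain_boundary boundary_d_M_anticommute d_M_d_M \<Phi> Y)
  qed (simp add: flow_differential_def)
qed

end

theorem proposition4p8:
  fixes Ch :: "'s \<Rightarrow> int \<Rightarrow> 'c::ab_group_add set"
    and dim :: "'s \<Rightarrow> nat" and prd :: "'s \<Rightarrow> 's \<Rightarrow> 's"
    and bd :: "'s \<Rightarrow> int \<Rightarrow> 'c \<Rightarrow> 'c"
    and fp :: "'s \<Rightarrow> 's \<Rightarrow> int \<Rightarrow> int \<Rightarrow> 'c \<Rightarrow> 'c \<Rightarrow> 'c"
    and fpp :: "'s \<Rightarrow> 's \<Rightarrow> 's \<Rightarrow> int \<Rightarrow> int \<Rightarrow> 'c \<Rightarrow> 'c \<Rightarrow> 'c"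
    and N :: nat and Ob :: "'s set" and ti :: "'s \<Rightarrow> 's \<Rightarrow> int"
    and CC :: "'s \<Rightarrow> 's \<Rightarrow> int \<Rightarrow> 'c"
  assumes "geometric_chain_model Ch dim prd bd fp fpp"
    and "finitely_graded_flow_category Ch dim prd bd fpp N Ob ti CC"
  shows "(\<forall>\<Phi>\<in>flow_complex Ch Ob.
            flow_differential dim bd fp Ob CC \<Phi> \<in> flow_complex Ch Ob)
       \<and> (\<forall>\<Phi>\<in>flow_complex Ch Ob. \<forall>\<Psi>\<in>flow_complex Ch Ob.
            flow_differential dim bd fp Ob CC (\<lambda>X k. \<Phi> X k + \<Psi> X k) =
            (\<lambda>Y j. flow_differential dim bd fp Ob CC \<Phi> Y j + flow_differential dim bd fp Ob CC \<Psi> Y j))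
       \<and> (\<forall>X\<in>Ob. \<forall>k. \<forall>\<phi>\<in>Ch X k. \<forall>Y\<in>Ob. \<forall>j.
            flow_differential dim bd fp Ob CC (single_chain X k \<phi>) Y j \<noteq> 0 \<longrightarrow>
            [k - j + ti X Y = 1] (mod (2 * int N)))
       \<and> (\<forall>\<Phi>\<in>flow_complex Ch Ob.
            flow_differential dim bd fp Ob CC (flow_differential dim bd fp Ob CC \<Phi>) = (\<lambda>Y j. 0))"
proof -
  interpret flow_category Ch dim prd bd fp fpp N Ob ti CC
    using assms by (simp add: flow_category_def geometric_chains_def flow_category_axioms_def)
  show ?thesis
    using flow_differential_closed flow_differential_add flow_differential_single_chain_degree
      flow_differential_squared
    by blast
qed

end
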